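(* For a ring $R$, the following are equivalent: (1) $R$ is uniquely clean; (2) $R$ is a DI ring in which every idempotent is central.
   Context: All rings are associative with identity; $U(R)$ is the group of units. $\Delta(R)=\{x\in R: x+u\in U(R)\text{ for all }u\in U(R)\}$. A ring $R$ is a DI ring if every $r\in R$ can be written $r=e+b$ with $e^2=e\in R$ and $b\in\Delta(R)$. A ring $R$ is uniquely clean if every element of $R$ can be written in exactly one way as $e+u$ with $e^2=e$ and $u\in U(R)$. *)

theory Defs
  imports Main
begin

definition units :: "'a::ring_1 set" where
  "units = {u. \<exists>v. u * v = 1 \<and> v * u = 1}"

definition idempotent :: "'a::ring_1 \<Rightarrow> bool" where
  "idempotent e \<longleftrightarrow> e * e = e"

definition Delta :: "'a::ring_1 set" where
  "Delta = {x. \<forall>u\<in>units. x + u \<in> units}"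

definition DI_ring :: "'a::ring_1 itself \<Rightarrow> bool" where
  "DI_ring TYPE('a) \<longleftrightarrow> (\<forall>r::'a. \<exists>e b. idempotent e \<and> b \<in> Delta \<and> r = e + b)"

definition uniquely_clean :: "'a::ring_1 itself \<Rightarrow> bool" where
  "uniquely_clean TYPE('a) \<longleftrightarrow> (\<forall>r::'a. \<exists>!p. idempotent (fst p) \<and> snd p \<in> units \<and> r = fst p + snd p)"

definition idempotents_central :: "'a::ring_1 itself \<Rightarrow> bool" where
  "idempotents_central TYPE('a) \<longleftrightarrow> (\<forall>e::'a. idempotent e \<longrightarrow> (\<forall>x. e * x = x * e))"

end

theory Submission
  imports Defs
begin

text \<open>
Uniqueness of clean decompositions forces idempotents to be central: for an idempotent \<open>e\<close>
and \<open>n = e x (1 - e)\<close>, both \<open>e\<close> and \<open>e + n\<close> are idempotent and \<open>e + 1 = (e + n) + (1 - n)\<close>.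
It also yields a cancellation principle: if \<open>s\<close> and \<open>s - g\<close> are units with \<open>g\<close> idempotent,
then \<open>g = 0\<close>, because \<open>s = 0 + s = g + (s - g)\<close>. Splitting along central idempotents, this
shows that \<open>x - 2e\<close> is a unit for every unit \<open>x\<close> and idempotent \<open>e\<close>, and then that
\<open>v + w + 1\<close> is a unit for all units \<open>v, w\<close>; so \<open>1 + v \<in> \<Delta>\<close>, and writing \<open>r - 1 = e + v\<close>
gives the DI decomposition \<open>r = e + (1 + v)\<close>.

Conversely, in a DI ring every unit lies in \<open>1 + \<Delta>\<close>, so two clean decompositions
\<open>e\<^sub>1 + u\<^sub>1 = e\<^sub>2 + u\<^sub>2\<close> give \<open>d = e\<^sub>1 - e\<^sub>2 \<in> \<Delta>\<close>. For commuting idempotents, \<open>h = d\<^sup>2\<close> is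
idempotent with \<open>h d = d\<close>, so \<open>1 - h - d\<close> is an involution and \<open>1 - h = d + (1 - h - d)\<close>
is a unit idempotent; hence \<open>h = 0\<close>, and \<open>e\<^sub>1 h = e\<^sub>1 - e\<^sub>1 e\<^sub>2\<close>, \<open>e\<^sub>2 h = e\<^sub>2 - e\<^sub>1 e\<^sub>2\<close> give
\<open>e\<^sub>1 = e\<^sub>1 e\<^sub>2 = e\<^sub>2\<close>.
\<close>

lemma unitsI: "u * v = 1 \<Longrightarrow> v * u = 1 \<Longrightarrow> (u::'a::ring_1) \<in> units"
  unfolding units_def by blast

lemma unitsE:
  assumes "(u::'a::ring_1) \<in> units"
  obtains v where "u * v = 1" "v * u = 1"
  using assms unfolding units_def by blast

lemma one_in_units: "(1::'a::ring_1) \<in> units"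
  by (rule unitsI[of _ 1]) simp_all

lemma units_mult:
  assumes "(a::'a::ring_1) \<in> units" "b \<in> units"
  shows "a * b \<in> units"
proof -
  obtain a' where a: "a * a' = 1" "a' * a = 1" using assms(1) by (rule unitsE)
  obtain b' where b: "b * b' = 1" "b' * b = 1" using assms(2) by (rule unitsE)
  have "(a * b) * (b' * a') = 1" by (metis a(1) b(1) mult.assoc mult_1_left)
  moreover have "(b' * a') * (a * b) = 1" by (metis a(2) b(2) mult.assoc mult_1_left)
  ultimately show ?thesis by (rule unitsI)
qed

lemma units_inverse:
  assumes "(a::'a::ring_1) \<in> units" "a * a' = 1" "a' * a = 1"
  shows "a' \<in> units"
  using assms(2,3) by (intro unitsI[of _ a])

lemma units_uminus:
  assumes "(a::'a::ring_1) \<in> units"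
  shows "- a \<in> units"
proof -
  obtain a' where "a * a' = 1" "a' * a = 1" using assms by (rule unitsE)
  then show ?thesis by (intro unitsI[of _ "- a'"]) simp_all
qed

lemma idempotent_zero: "idempotent (0::'a::ring_1)"
  by (simp add: idempotent_def)

lemma idempotent_one: "idempotent (1::'a::ring_1)"
  by (simp add: idempotent_def)

lemma idempotent_one_minus: "idempotent (e::'a::ring_1) \<Longrightarrow> idempotent (1 - e)"
  by (simp add: idempotent_def algebra_simps)

lemma idempotent_mult_commuting:
  assumes "idempotent (e::'a::ring_1)" "idempotent f" "e * f = f * e"
  shows "idempotent (e * f)"
proof -
  have "(e * f) * (e * f) = (e * e) * (f * f)" by (metis assms(3) mult.assoc)
  then show ?thesis using assms(1,2) by (simp add: idempotent_def)
qed

lemma idempotent_unit_eq_one: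
  assumes "idempotent (e::'a::ring_1)" "e \<in> units"
  shows "e = 1"
proof -
  obtain v where v: "e * v = 1" using assms(2) by (rule unitsE)
  have "e = e * (e * v)" using v by simp
  also have "\<dots> = e * v" using assms(1) by (simp add: idempotent_def mult.assoc[symmetric])
  finally show ?thesis using v by simp
qed

lemma central_idempotent_mult_split:
  assumes central: "\<And>x. e * x = x * (e::'a::ring_1)" and idem: "idempotent e"
  shows "(e * x + (1 - e) * y) * (e * x' + (1 - e) * y') = e * (x * x') + (1 - e) * (y * y')"
proof -
  define g where "g = 1 - e"
  have ee: "e * e = e" using idem by (simp add: idempotent_def)
  have central_g: "g * z = z * g" for z by (simp add: g_def algebra_simps central)
  have gg: "g * g = g" and eg: "e * g = 0" "g * e = 0" by (simp_all add: g_def algebra_simps ee)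
  have "(e * x + g * y) * (e * x' + g * y')
      = (e * x) * (e * x') + (e * x) * (g * y') + (g * y) * (e * x') + (g * y) * (g * y')"
    by (simp add: distrib_left distrib_right add.assoc)
  also have "(e * x) * (e * x') = e * (x * x')" by (metis central ee mult.assoc)
  also have "(e * x) * (g * y') = 0" by (metis central eg(1) mult.assoc mult_zero_left mult_zero_right)
  also have "(g * y) * (e * x') = 0" by (metis central_g eg(2) mult.assoc mult_zero_left mult_zero_right)
  also have "(g * y) * (g * y') = g * (y * y')" by (metis central_g gg mult.assoc)
  finally show ?thesis by (simp add: g_def)
qed

lemma central_idempotent_split_unit:
  assumes central: "\<And>x. e * x = x * (e::'a::ring_1)" and idem: "idempotent e"
    and "a \<in> units" "b \<in> units"
  shows "e * a + (1 - e) * b \<in> units"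
proof -
  obtain a' where a: "a * a' = 1" "a' * a = 1" using assms(3) by (rule unitsE)
  obtain b' where b: "b * b' = 1" "b' * b = 1" using assms(4) by (rule unitsE)
  note split = central_idempotent_mult_split[OF central idem]
  have "(e * a + (1 - e) * b) * (e * a' + (1 - e) * b') = 1" by (simp add: split a b)
  moreover have "(e * a' + (1 - e) * b') * (e * a + (1 - e) * b) = 1" by (simp add: split a b)
  ultimately show ?thesis by (rule unitsI)
qed

lemma uniquely_clean_iff:
  "uniquely_clean TYPE('a::ring_1) \<longleftrightarrow>
     (\<forall>r::'a. \<exists>e u. idempotent e \<and> u \<in> units \<and> r = e + u) \<and>
     (\<forall>e f u v :: 'a. idempotent e \<longrightarrow> idempotent f \<longrightarrow> u \<in> units \<longrightarrow> v \<in> units \<longrightarrow>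
        e + u = f + v \<longrightarrow> e = f)"
  (is "_ \<longleftrightarrow> ?exists \<and> ?unique")
proof
  assume uc: "uniquely_clean TYPE('a)"
  show "?exists \<and> ?unique"
  proof
    show ?exists using uc unfolding uniquely_clean_def by (metis fst_conv snd_conv)
    show ?unique
    proof (intro allI impI)
      fix e f u v :: 'a
      assume "idempotent e" "idempotent f" "u \<in> units" "v \<in> units" "e + u = f + v"
      moreover have "\<exists>!p. idempotent (fst p) \<and> snd p \<in> units \<and> e + u = fst p + snd p"
        using uc unfolding uniquely_clean_def by blast
      ultimately have "(e, u) = (f, v)" by (metis fst_conv snd_conv)
      then show "e = f" by simp
    qed
  qed
next
  assume exists_unique: "?exists \<and> ?unique"
  show "uniquely_clean TYPE('a)"
    unfolding uniquely_clean_def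
  proof
    fix r :: 'a
    obtain e u where eu: "idempotent e" "u \<in> units" "r = e + u" using exists_unique by blast
    show "\<exists>!p. idempotent (fst p) \<and> snd p \<in> units \<and> r = fst p + snd p"
    proof (rule ex1I[of _ "(e, u)"])
      fix q :: "'a \<times> 'a"
      assume q: "idempotent (fst q) \<and> snd q \<in> units \<and> r = fst q + snd q"
      then have "fst q = e" using exists_unique eu by metis
      with q eu show "q = (e, u)" by (simp add: prod_eq_iff)
    qed (use eu in simp)
  qed
qed

lemma uniquely_clean_exists:
  assumes "uniquely_clean TYPE('a::ring_1)"
  obtains e u where "idempotent e" "u \<in> units" "(r::'a) = e + u"
  using assms unfolding uniquely_clean_iff by blast

lemma uniquely_clean_unique:
  assumes "uniquely_clean TYPE('a::ring_1)" "idempotent e" "idempotent f"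
    "u \<in> units" "v \<in> units" "(e::'a) + u = f + v"
  shows "e = f"
  using assms unfolding uniquely_clean_iff by blast

lemma uniquely_clean_idempotent_eq_zero:
  assumes uc: "uniquely_clean TYPE('a::ring_1)" and "idempotent (g::'a)"
    and "s \<in> units" "s - g \<in> units"
  shows "g = 0"
  using uniquely_clean_unique[OF uc idempotent_zero assms(2-4)] by simp

lemma uniquely_clean_idempotent_corner_zero:
  assumes uc: "uniquely_clean TYPE('a::ring_1)" and idem: "idempotent (e::'a)"
  shows "e * x * (1 - e) = 0"
proof -
  define n where "n = e * x * (1 - e)"
  have ee: "e * e = e" using idem by (simp add: idempotent_def)
  have en: "e * n = n" by (simp add: n_def mult.assoc[symmetric] ee)
  have ne: "n * e = 0" by (simp add: n_def mult.assoc algebra_simps ee)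
  have nn: "n * n = 0" by (metis ne n_def mult.assoc mult_zero_left)
  have "idempotent (e + n)"
    unfolding idempotent_def by (simp add: distrib_left distrib_right ee en ne nn)
  moreover have "1 - n \<in> units" by (rule unitsI[of _ "1 + n"]) (simp_all add: algebra_simps nn)
  moreover have "e + 1 = (e + n) + (1 - n)" by simp
  ultimately have "e = e + n" using uniquely_clean_unique[OF uc idem] one_in_units by blast
  then show ?thesis by (simp add: n_def)
qed

lemma uniquely_clean_idempotent_central:
  assumes uc: "uniquely_clean TYPE('a::ring_1)" and idem: "idempotent (e::'a)"
  shows "e * x = x * e"
proof -
  have ee: "e * (x * (e * e)) = e * (x * e)" using idem by (simp add: idempotent_def)
  have "e * x * (1 - e) = 0" by (rule uniquely_clean_idempotent_corner_zero[OF uc idem])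
  then have "e * x = e * x * e" by (simp add: algebra_simps ee)
  moreover have "(1 - e) * x * (1 - (1 - e)) = 0"
    by (rule uniquely_clean_idempotent_corner_zero[OF uc idempotent_one_minus[OF idem]])
  then have "x * e = e * x * e" using idem by (simp add: algebra_simps idempotent_def)
  ultimately show ?thesis by simp
qed

lemma uniquely_clean_unit_minus_two_idempotent:
  assumes uc: "uniquely_clean TYPE('a::ring_1)" and idem_e: "idempotent (e::'a)"
    and x: "x \<in> units"
  shows "x - e - e \<in> units"
proof -
  obtain f v where idem_f: "idempotent f" and v: "v \<in> units" and xe: "x - e = f + v"
    using uniquely_clean_exists[OF uc] by blast
  note central = uniquely_clean_idempotent_central[OF uc]
  have ee: "e * e = e" and ff: "f * f = f" using idem_e idem_f by (simp_all add: idempotent_def)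
  have ef: "e * f = e"
  proof -
    define g where "g = e * (1 - f)"
    have idem_g: "idempotent g" unfolding g_def
      by (intro idempotent_mult_commuting idem_e idempotent_one_minus idem_f central)
    have gf: "g * f = 0" by (simp add: g_def mult.assoc algebra_simps ff)
    have ge: "g * e = g" by (metis g_def central[OF idem_e] ee mult.assoc)
    have "g * x - g = g * v"
      using arg_cong[OF xe, of "(*) g"] by (simp add: gf ge algebra_simps)
    then have "g * x + (1 - g) * 1 - g = g * v + (1 - g) * 1" by (simp add: algebra_simps)
    then have "g = 0"
      using uniquely_clean_idempotent_eq_zero[OF uc idem_g]
        central_idempotent_split_unit[OF central[OF idem_g] idem_g] x v one_in_units
      by metis
    then show ?thesis by (simp add: g_def algebra_simps)
  qed
  have "e * (x - e - e) = e * v"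
    using arg_cong[OF xe, of "(*) e"] by (simp add: ef ee algebra_simps)
  then have "x - e - e = e * v + (1 - e) * x" by (simp add: algebra_simps ee)
  then show ?thesis using central_idempotent_split_unit[OF central[OF idem_e] idem_e v x] by simp
qed

lemma uniquely_clean_unit_plus_two:
  assumes uc: "uniquely_clean TYPE('a::ring_1)" and t: "(t::'a) \<in> units"
  shows "t + 1 + 1 \<in> units"
proof -
  have "- t - 1 - 1 \<in> units"
    by (rule uniquely_clean_unit_minus_two_idempotent[OF uc idempotent_one units_uminus[OF t]])
  then have "- (- t - 1 - 1) \<in> units" by (rule units_uminus)
  moreover have "- (- t - 1 - 1) = t + 1 + 1" by simp
  ultimately show ?thesis by (simp only:)
qed

lemma uniquely_clean_units_add_minus_one:
  assumes uc: "uniquely_clean TYPE('a::ring_1)" and v: "(v::'a) \<in> units" and w: "w \<in> units"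
  shows "v + w - 1 \<in> units"
proof -
  obtain e t where idem: "idempotent e" and t: "t \<in> units" and z: "v + w - 1 = e + t"
    using uniquely_clean_exists[OF uc] by blast
  note central = uniquely_clean_idempotent_central[OF uc idem]
  have ee: "e * e = e" using idem by (simp add: idempotent_def)
  have "e * v + e * w = e * (t + 1 + 1)"
    using arg_cong[OF z, of "(*) e"] by (simp add: ee algebra_simps)
  then have "v + e * w = e * (t + 1 + 1) + (1 - e) * v" by (simp add: algebra_simps)
  then have vew: "v + e * w \<in> units"
    using central_idempotent_split_unit[OF central idem uniquely_clean_unit_plus_two[OF uc t] v]
    by simp
  obtain w' where w': "w * w' = 1" "w' * w = 1" using w by (rule unitsE)
  have "w' * (e * w) = e * (w' * w)" by (metis central mult.assoc)
  then have "w' * (v + e * w) = w' * v + e" by (simp add: distrib_left w')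
  then have "w' * v + e \<in> units"
    using units_mult[OF units_inverse[OF w w'] vew] by simp
  then have "w' * v + e - e - e \<in> units"
    by (rule uniquely_clean_unit_minus_two_idempotent[OF uc idem])
  then have "e = 0"
    using uniquely_clean_idempotent_eq_zero[OF uc idem units_mult[OF units_inverse[OF w w'] v]]
    by simp
  then show ?thesis using z t by simp
qed

lemma uniquely_clean_one_plus_unit_in_Delta:
  assumes uc: "uniquely_clean TYPE('a::ring_1)" and v: "(v::'a) \<in> units"
  shows "1 + v \<in> Delta"
  unfolding Delta_def
proof (intro CollectI ballI)
  fix u :: 'a
  assume "u \<in> units"
  then have "v + u - 1 + 1 + 1 \<in> units"
    by (intro uniquely_clean_unit_plus_two[OF uc] uniquely_clean_units_add_minus_one[OF uc v])
  then show "1 + v + u \<in> units" by (simp add: algebra_simps)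
qed

lemma uniquely_clean_imp_DI_ring:
  assumes uc: "uniquely_clean TYPE('a::ring_1)"
  shows "DI_ring TYPE('a)"
  unfolding DI_ring_def
proof
  fix r :: 'a
  obtain e v where "idempotent e" "v \<in> units" "r - 1 = e + v"
    using uniquely_clean_exists[OF uc] by blast
  moreover from this have "r = e + (1 + v)" by (simp add: algebra_simps)
  ultimately show "\<exists>e b. idempotent e \<and> b \<in> Delta \<and> r = e + b"
    using uniquely_clean_one_plus_unit_in_Delta[OF uc] by blast
qed

lemma Delta_uminus: "(b::'a::ring_1) \<in> Delta \<Longrightarrow> - b \<in> Delta"
  unfolding Delta_def
proof safe
  fix u :: 'a
  assume "\<forall>u\<in>units. b + u \<in> units" "u \<in> units"
  then have "- (b + - u) \<in> units" using units_uminus by blast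
  then show "- b + u \<in> units" by simp
qed

lemma Delta_add: "(a::'a::ring_1) \<in> Delta \<Longrightarrow> b \<in> Delta \<Longrightarrow> a + b \<in> Delta"
  unfolding Delta_def by (simp add: add.assoc)

lemma Delta_diff: "(a::'a::ring_1) \<in> Delta \<Longrightarrow> b \<in> Delta \<Longrightarrow> a - b \<in> Delta"
  using Delta_add Delta_uminus by (metis diff_conv_add_uminus)

lemma one_plus_Delta_in_units: "(b::'a::ring_1) \<in> Delta \<Longrightarrow> 1 + b \<in> units"
  unfolding Delta_def using one_in_units by (metis (no_types, lifting) add.commute mem_Collect_eq)

lemma DI_ring_unit_minus_one_in_Delta:
  assumes di: "DI_ring TYPE('a::ring_1)" and u: "(u::'a) \<in> units"
  shows "u - 1 \<in> Delta"
proof -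
  obtain e b where idem: "idempotent e" and b: "b \<in> Delta" and z: "u = e + b"
    using di unfolding DI_ring_def by blast
  have "- b + u \<in> units" using Delta_uminus[OF b] u unfolding Delta_def by blast
  then have "e = 1" using idempotent_unit_eq_one[OF idem] z by (simp add: algebra_simps)
  then show ?thesis using z b by simp
qed

lemma commuting_idempotents_eq_of_diff_in_Delta:
  assumes idem: "idempotent (e\<^sub>1::'a::ring_1)" "idempotent e\<^sub>2"
    and comm: "e\<^sub>2 * e\<^sub>1 = e\<^sub>1 * e\<^sub>2" and d: "e\<^sub>1 - e\<^sub>2 \<in> Delta"
  shows "e\<^sub>1 = e\<^sub>2"
proof -
  define p where "p = e\<^sub>1 * e\<^sub>2"
  define d where "d = e\<^sub>1 - e\<^sub>2"
  define h where "h = e\<^sub>1 + e\<^sub>2 - p - p"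
  have ee: "e\<^sub>1 * e\<^sub>1 = e\<^sub>1" "e\<^sub>2 * e\<^sub>2 = e\<^sub>2" using idem by (simp_all add: idempotent_def)
  have comm_p: "e\<^sub>2 * e\<^sub>1 = p" using comm by (simp add: p_def)
  have pe: "e\<^sub>1 * p = p" "p * e\<^sub>1 = p" "e\<^sub>2 * p = p" "p * e\<^sub>2 = p" "p * p = p"
    unfolding p_def using ee comm by (metis mult.assoc)+
  note simps = algebra_simps ee comm_p pe p_def[symmetric]
  have dd: "d * d = h" and hd: "h * d = d" "d * h = d" and hh: "h * h = h"
    by (simp_all add: d_def h_def simps)
  have "(1 - h - d) * (1 - h - d) = 1" by (simp add: algebra_simps dd hd hh)
  then have "d + (1 - h - d) \<in> units" using d unitsI unfolding d_def Delta_def by blast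
  moreover have "idempotent (1 - h)" using hh by (simp add: idempotent_def algebra_simps)
  ultimately have "h = 0" using idempotent_unit_eq_one by fastforce
  moreover have "e\<^sub>1 * h = e\<^sub>1 - p" "e\<^sub>2 * h = e\<^sub>2 - p" by (simp_all add: h_def simps)
  ultimately show ?thesis by simp
qed

lemma DI_ring_central_idempotents_imp_uniquely_clean:
  assumes di: "DI_ring TYPE('a::ring_1)" and central: "idempotents_central TYPE('a)"
  shows "uniquely_clean TYPE('a)"
  unfolding uniquely_clean_iff
proof (intro conjI allI impI)
  fix r :: 'a
  obtain e b where "idempotent e" "b \<in> Delta" "r - 1 = e + b"
    using di unfolding DI_ring_def by blast
  then show "\<exists>e u. idempotent e \<and> u \<in> units \<and> r = e + u"
    using one_plus_Delta_in_units by (metis add.commute add.left_commute diff_eq_eq)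
next
  fix e f u v :: 'a
  assume "idempotent e" "idempotent f" "u \<in> units" "v \<in> units" "e + u = f + v"
  moreover from this have "e - f = (v - 1) - (u - 1)" by (simp add: algebra_simps)
  ultimately show "e = f"
    using commuting_idempotents_eq_of_diff_in_Delta central Delta_diff
      DI_ring_unit_minus_one_in_Delta[OF di]
    unfolding idempotents_central_def by metis
qed

theorem corollary4p7:
  shows "uniquely_clean TYPE('a::ring_1) \<longleftrightarrow>
         (DI_ring TYPE('a) \<and> idempotents_central TYPE('a))"
  using uniquely_clean_imp_DI_ring uniquely_clean_idempotent_central
    DI_ring_central_idempotents_imp_uniquely_clean
  unfolding idempotents_central_def by metis

end
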